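(* There is a formula $\phi$ of $\mathcal{D}(\mathsf{M})$ containing no dependence atoms (and no negated dependence atoms) such that $\phi$ is not $k$-coherent for any $k\in\mathbb N$ (in particular $\phi$ is not flat).
   Context: All structures are finite. Dependence logic with majority, $\mathcal{D}(\mathsf{M})[\tau]$: formulas over a vocabulary $\tau$ in negation normal form, built from first-order literals (atomic formulas and negated atomic formulas), dependence atoms $=\!(t_1,\dots,t_n)$ ($t_i$ terms) and their negations $\neg=\!(t_1,\dots,t_n)$, using $\wedge$, $\vee$, $\exists x$, $\forall x$ and $\mathsf{M}x$. Free variables are as in first-order logic ($\mathsf{M}x$ binds $x$), and the free variables of $=\!(t_1,\dots,t_n)$ are all variables occurring in $t_1,\dots,t_n$. A team $X$ over a structure $\mathfrak A$ with domain $A$ and with finite variable domain $\mathrm{dom}(X)$ is a set of assignments $s:\mathrm{dom}(X)\to A$. For $F:X\to A$ let $X(F/x)=\{s(F(s)/x): s\in X\}$ and $X(A/x)=\{s(a/x): s\in X, a\in A\}$, where $s(a/x)$ agrees with $s$ except that it maps $x$ to $a$. Satisfaction $\mathfrak A\models_X\phi$ (for teams whose domain contains the free variables of $\phi$): for a first-order literal, every $s\in X$ satisfies it in the usual sense; $\mathfrak A\models_X =\!(t_1,\dots,t_n)$ iff any $s,s'\in X$ giving equal values to $t_1,\dots,t_{n-1}$ give equal values to $t_n$ ($=\!()$ is always true); $\mathfrak A\models_X\neg=\!(t_1,\dots,t_n)$ iff $X=\emptyset$; $\mathfrak A\models_X\psi\wedge\chi$ iff both hold; $\mathfrak A\models_X\psi\vee\chi$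 iff $X=Y\cup Z$ with $\mathfrak A\models_Y\psi$ and $\mathfrak A\models_Z\chi$; $\mathfrak A\models_X\exists x\psi$ iff $\mathfrak A\models_{X(F/x)}\psi$ for some $F:X\to A$; $\mathfrak A\models_X\forall x\psi$ iff $\mathfrak A\models_{X(A/x)}\psi$; $\mathfrak A\models_X\mathsf{M}x\psi$ iff for at least $|A|^{|X|}/2$ many functions $F:X\to A$ we have $\mathfrak A\models_{X(F/x)}\psi$. A formula $\phi$ is $k$-coherent iff for all structures $\mathfrak A$ and all teams $X$ (with domain containing the free variables of $\phi$): $\mathfrak A\models_X\phi$ holds if and only if $\mathfrak A\models_{X'}\phi$ holds for every $k$-element subteam $X'\subseteq X$. $1$-coherent formulas are called flat. *)

theory Defs
  imports Complex_Main "HOL-Library.FuncSet"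
begin

text \<open>A function/relation symbol applied to argument lists of different lengths behaves
  as distinct symbols of the respective arities, so this generic syntax covers every
  vocabulary tau.\<close>

datatype trm = Var nat | Fn nat "trm list"

datatype fml =
    Eq trm trm
  | NEq trm trm
  | Rel nat "trm list"
  | NRel nat "trm list"
  | Dep "trm list"
  | NDep "trm list"
  | Conj fml fml
  | Disj fml fml
  | Exists nat fml
  | Forall nat fml
  | Maj nat fml

fun tvars :: "trm \<Rightarrow> nat set" where
  "tvars (Var x) = {x}"
| "tvars (Fn f ts) = (\<Union>t\<in>set ts. tvars t)"

primrec fv :: "fml \<Rightarrow> nat set" where
  "fv (Eq t u) = tvars t \<union> tvars u"
| "fv (NEq t u) = tvars t \<union> tvars u"
| "fv (Rel R ts) = (\<Union>t\<in>set ts. tvars t)"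
| "fv (NRel R ts) = (\<Union>t\<in>set ts. tvars t)"
| "fv (Dep ts) = (\<Union>t\<in>set ts. tvars t)"
| "fv (NDep ts) = (\<Union>t\<in>set ts. tvars t)"
| "fv (Conj p q) = fv p \<union> fv q"
| "fv (Disj p q) = fv p \<union> fv q"
| "fv (Exists x p) = fv p - {x}"
| "fv (Forall x p) = fv p - {x}"
| "fv (Maj x p) = fv p - {x}"

primrec dep_free :: "fml \<Rightarrow> bool" where
  "dep_free (Eq t u) = True"
| "dep_free (NEq t u) = True"
| "dep_free (Rel R ts) = True"
| "dep_free (NRel R ts) = True"
| "dep_free (Dep ts) = False"
| "dep_free (NDep ts) = False"
| "dep_free (Conj p q) = (dep_free p \<and> dep_free q)"
| "dep_free (Disj p q) = (dep_free p \<and> dep_free q)"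
| "dep_free (Exists x p) = dep_free p"
| "dep_free (Forall x p) = dep_free p"
| "dep_free (Maj x p) = dep_free p"

text \<open>Finite structures; up to isomorphism every finite structure has a domain that
  is a finite nonempty subset of nat.\<close>

record struc =
  sdom :: "nat set"
  sfun :: "nat \<Rightarrow> nat list \<Rightarrow> nat"
  srel :: "nat \<Rightarrow> nat list set"

definition struc_ok :: "struc \<Rightarrow> bool" where
  "struc_ok M \<longleftrightarrow> finite (sdom M) \<and> sdom M \<noteq> {} \<and>
     (\<forall>f xs. set xs \<subseteq> sdom M \<longrightarrow> sfun M f xs \<in> sdom M)"

type_synonym assign = "nat \<Rightarrow> nat option"
type_synonym team = "assign set"

definition team_on :: "struc \<Rightarrow> nat set \<Rightarrow> team \<Rightarrow> bool" where
  "team_on M D X \<longleftrightarrow> finite D \<and> (\<forall>s\<in>X. dom s = D \<and> ran s \<subseteq> sdom M)"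

fun teval :: "struc \<Rightarrow> assign \<Rightarrow> trm \<Rightarrow> nat" where
  "teval M s (Var x) = the (s x)"
| "teval M s (Fn f ts) = sfun M f (map (teval M s) ts)"

definition supd :: "team \<Rightarrow> (assign \<Rightarrow> nat) \<Rightarrow> nat \<Rightarrow> team" where
  "supd X F x = {s(x \<mapsto> F s) | s. s \<in> X}"

definition sdup :: "struc \<Rightarrow> team \<Rightarrow> nat \<Rightarrow> team" where
  "sdup M X x = {s(x \<mapsto> a) | s a. s \<in> X \<and> a \<in> sdom M}"

primrec sat :: "struc \<Rightarrow> fml \<Rightarrow> team \<Rightarrow> bool" where
  "sat M (Eq t u) X = (\<forall>s\<in>X. teval M s t = teval M s u)"
| "sat M (NEq t u) X = (\<forall>s\<in>X. teval M s t \<noteq> teval M s u)"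
| "sat M (Rel R ts) X = (\<forall>s\<in>X. map (teval M s) ts \<in> srel M R)"
| "sat M (NRel R ts) X = (\<forall>s\<in>X. map (teval M s) ts \<notin> srel M R)"
| "sat M (Dep ts) X = (ts = [] \<or>
     (\<forall>s\<in>X. \<forall>s'\<in>X. (\<forall>t\<in>set (butlast ts). teval M s t = teval M s' t)
        \<longrightarrow> teval M s (last ts) = teval M s' (last ts)))"
| "sat M (NDep ts) X = (X = {})"
| "sat M (Conj p q) X = (sat M p X \<and> sat M q X)"
| "sat M (Disj p q) X = (\<exists>Y Z. X = Y \<union> Z \<and> sat M p Y \<and> sat M q Z)"
| "sat M (Exists x p) X = (\<exists>F\<in>X \<rightarrow>\<^sub>E sdom M. sat M p (supd X F x))"
| "sat M (Forall x p) X = sat M p (sdup M X x)"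
| "sat M (Maj x p) X =
     (real (card {F\<in>X \<rightarrow>\<^sub>E sdom M. sat M p (supd X F x)})
        \<ge> real (card (sdom M)) ^ card X / 2)"

definition coherent :: "nat \<Rightarrow> fml \<Rightarrow> bool" where
  "coherent k \<phi> \<longleftrightarrow>
     (\<forall>M D X. struc_ok M \<longrightarrow> fv \<phi> \<subseteq> D \<longrightarrow> team_on M D X \<longrightarrow>
        (sat M \<phi> X \<longleftrightarrow> (\<forall>X'\<subseteq>X. card X' = k \<longrightarrow> sat M \<phi> X')))"

end

theory Submission
  imports Defs
begin

text \<open>
  The witness is the formula  M x (x = y)  for two distinct variables x, y: "for at
  least half of all ways of choosing x, x copies y".  On a team X in which y takes
  values in the domain A there is exactly one choice function F : X \<rightarrow> A making x = y
  true, namely F(s) = s(y).  Hence the formula holds on X iff 1 \<ge> |A|^|X| / 2, i.e.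
  iff |A|^|X| \<le> 2: whether it holds depends on the size of the team, not only on its
  small subteams.

  Teams of y-values over
  the pure set structures on {0,1} and {0,1,2} then refute k-coherence: for k = 1 the
  team with two values on a two-element domain, for k \<noteq> 1 a one-element team on a
  three-element domain.
\<close>

definition maj_copy :: "nat \<Rightarrow> nat \<Rightarrow> fml" where
  "maj_copy x y = Maj x (Eq (Var x) (Var y))"

lemma dep_free_maj_copy: "dep_free (maj_copy x y)"
  by (simp add: maj_copy_def)

lemma fv_maj_copy: "x \<noteq> y \<Longrightarrow> fv (maj_copy x y) = {y}"
  by (auto simp: maj_copy_def)

lemma copy_witnesses_unique:
  assumes "x \<noteq> y" and y_vals: "\<forall>s\<in>X. the (s y) \<in> sdom M"
  shows "{F \<in> X \<rightarrow>\<^sub>E sdom M. sat M (Eq (Var x) (Var y)) (supd X F x)}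
         = {restrict (\<lambda>s. the (s y)) X}"
proof -
  have "sat M (Eq (Var x) (Var y)) (supd X F x) \<longleftrightarrow> (\<forall>s\<in>X. F s = the (s y))" for F
    using \<open>x \<noteq> y\<close> by (auto simp: supd_def)
  then show ?thesis
    using y_vals by (auto simp: PiE_def extensional_def)
qed

lemma sat_maj_copy:
  assumes "x \<noteq> y" and "\<forall>s\<in>X. the (s y) \<in> sdom M"
  shows "sat M (maj_copy x y) X \<longleftrightarrow> card (sdom M) ^ card X \<le> 2"
proof -
  have "sat M (maj_copy x y) X \<longleftrightarrow> real (card (sdom M)) ^ card X / 2 \<le> 1"
    using copy_witnesses_unique[OF assms] by (simp add: maj_copy_def)
  also have "\<dots> \<longleftrightarrow> card (sdom M) ^ card X \<le> 2"
    by (simp flip: of_nat_power)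
  finally show ?thesis .
qed

lemma not_coherent_by_counterexample:
  assumes "struc_ok M" "fv \<phi> \<subseteq> D" "team_on M D X"
    and "\<not> sat M \<phi> X" and "\<And>X'. X' \<subseteq> X \<Longrightarrow> card X' = k \<Longrightarrow> sat M \<phi> X'"
  shows "\<not> coherent k \<phi>"
  using assms unfolding coherent_def by blast

definition pure_struc :: "nat set \<Rightarrow> struc" where
  "pure_struc A = \<lparr>sdom = A, sfun = (\<lambda>f xs. 0), srel = (\<lambda>R. {})\<rparr>"

lemma struc_ok_pure_struc: "finite A \<Longrightarrow> 0 \<in> A \<Longrightarrow> struc_ok (pure_struc A)"
  by (auto simp: struc_ok_def pure_struc_def)

definition value_team :: "nat \<Rightarrow> nat set \<Rightarrow> team" where
  "value_team y B = (\<lambda>b. [y \<mapsto> b]) ` B"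

lemma card_value_team: "card (value_team y B) = card B"
proof -
  have "inj_on (\<lambda>b. [y \<mapsto> b]) B"
    by (rule inj_onI) (metis fun_upd_same option.inject)
  then show ?thesis
    unfolding value_team_def by (rule card_image)
qed

lemma team_on_value_team:
  "B \<subseteq> A \<Longrightarrow> team_on (pure_struc A) {y} (value_team y B)"
  by (auto simp: team_on_def pure_struc_def value_team_def)

lemma value_team_values:
  "B \<subseteq> A \<Longrightarrow> X \<subseteq> value_team y B \<Longrightarrow> \<forall>s\<in>X. the (s y) \<in> sdom (pure_struc A)"
  unfolding pure_struc_def value_team_def by force

lemma maj_copy_not_coherent:
  assumes "x \<noteq> y" "finite A" "0 \<in> A" "B \<subseteq> A"
    and fails: "card A ^ card B > 2"
    and small: "\<And>X'. X' \<subseteq> value_team y B \<Longrightarrow> card X' = k \<Longrightarrow> card A ^ k \<le> 2"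
  shows "\<not> coherent k (maj_copy x y)"
proof (rule not_coherent_by_counterexample)
  let ?M = "pure_struc A" and ?X = "value_team y B"
  have dom_M: "sdom ?M = A" by (simp add: pure_struc_def)
  show "struc_ok ?M" using assms by (simp add: struc_ok_pure_struc)
  show "fv (maj_copy x y) \<subseteq> {y}" using \<open>x \<noteq> y\<close> by (simp add: fv_maj_copy)
  show "team_on ?M {y} ?X" using \<open>B \<subseteq> A\<close> by (rule team_on_value_team)
  show "\<not> sat ?M (maj_copy x y) ?X"
    using sat_maj_copy[OF \<open>x \<noteq> y\<close> value_team_values[OF \<open>B \<subseteq> A\<close> order_refl]] fails
    by (simp add: dom_M card_value_team)
  show "sat ?M (maj_copy x y) X'" if "X' \<subseteq> ?X" "card X' = k" for X'
    using sat_maj_copy[OF \<open>x \<noteq> y\<close> value_team_values[OF \<open>B \<subseteq> A\<close> that(1)]] small[OF that]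
    by (simp add: dom_M that(2))
qed

theorem mainTheorem3:
  shows "\<exists>\<phi>. dep_free \<phi> \<and> (\<forall>k::nat. \<not> coherent k \<phi>)"
proof (intro exI[of _ "maj_copy 0 1"] conjI allI)
  show "dep_free (maj_copy 0 1)" by (rule dep_free_maj_copy)
  fix k :: nat
  show "\<not> coherent k (maj_copy 0 1)"
  proof (cases "k = 1")
    case True
    text \<open>Two values on a two-element domain: 2^2 > 2, but 2^1 \<le> 2.\<close>
    show ?thesis
      by (rule maj_copy_not_coherent[where A = "{0, 1}" and B = "{0, 1}"]) (use True in auto)
  next
    case False
    text \<open>One value on a three-element domain: 3^1 > 2; a subteam of a singleton with
      k \<noteq> 1 elements is empty, and 3^0 \<le> 2.\<close>
    have small: "card {0, 1, 2 :: nat} ^ k \<le> 2" if "X' \<subseteq> value_team 1 {0}" "card X' = k" for X'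
    proof -
      have "X' = {} \<or> X' = {[1 \<mapsto> 0]}"
        using that(1) by (auto simp: value_team_def subset_singleton_iff)
      with that(2) False have "k = 0" by auto
      then show ?thesis by simp
    qed
    show ?thesis
      by (rule maj_copy_not_coherent[OF _ _ _ _ _ small]) auto
  qed
qed

end
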